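(* (a) If $V_T(\cdot)$ is continuous on $Y$ for every natural number $T$, then $\limsup_{T\to\infty}V_T(y_0)\le k^*(y_0)$ for all $y_0\in Y$. (b) If $h_\alpha(\cdot)$ is continuous on $Y$ for every $\alpha\in(0,1)$, then $\limsup_{\alpha\uparrow1}h_\alpha(y_0)\le k^*(y_0)$ for all $y_0\in Y$.
   Context: Let $Y\subset\mathbb{R}^m$ be nonempty compact, $U_0$ a compact metric space, $U(\cdot):Y\rightsquigarrow U_0$ upper semicontinuous and compact-valued, and $f:\mathbb{R}^m\times U_0\to\mathbb{R}^m$, $k:\mathbb{R}^m\times U_0\to\mathbb{R}$ continuous. Put $A(y):=\{u\in U(y): f(y,u)\in Y\}$ and $G:=\{(y,u):y\in Y,\ u\in A(y)\}$. Standing assumption: $A(y)\ne\emptyset$ for all $y\in Y$. For $y_0\in Y$, an admissible process on $\{0,\dots,T-1\}$ (respectively on $\{0,1,\dots\}$) is a pair $(y(t),u(t))$ with $y(0)=y_0$, $u(t)\in A(y(t))$ and $y(t+1)=f(y(t),u(t))$. The controls of such processes form $\mathcal U_T(y_0)$ (respectively $\mathcal U(y_0)$). Value functions: $$V_T(y_0):=\frac1T\min_{u\in\mathcal U_T(y_0)}\sum_{t=0}^{T-1}k(y(t),u(t)),\qquad h_\alpha(y_0):=(1-\alpha)\min_{u\in\mathcal U(y_0)}\sum_{t=0}^{\infty}\alpha^tk(y(t),u(t)).$$ LP value: - $\mathcal P(G)$ denotes the Borel probability measures on $G$ and $\mathcal M_+(G)$ the finite nonnegative Borel measures on $G$. -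 $W:=\{\gamma\in\mathcal P(G):\int_G(\varphi(f(y,u))-\varphi(y))\,d\gamma=0\ \forall\varphi\in C(Y)\}$. - $k^*(y_0)$ is the infimum of $\int_Gk(y,u)\,\gamma(dy,du)$ over pairs $(\gamma,\xi)\in\mathcal P(G)\times\mathcal M_+(G)$ with $\gamma\in W$ and $\int_G(\varphi(y_0)-\varphi(y))\,\gamma(dy,du)+\int_G(\varphi(f(y,u))-\varphi(y))\,\xi(dy,du)=0$ for all $\varphi\in C(Y)$. *)

theory Defs
  imports "HOL-Probability.Probability"
begin

definition Adm :: "'a set \<Rightarrow> ('a \<Rightarrow> 'b set) \<Rightarrow> ('a \<times> 'b \<Rightarrow> 'a) \<Rightarrow> 'a \<Rightarrow> 'b set" where
  "Adm Y U f y = {u \<in> U y. f (y, u) \<in> Y}"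

definition Gset :: "'a set \<Rightarrow> ('a \<Rightarrow> 'b set) \<Rightarrow> ('a \<times> 'b \<Rightarrow> 'a) \<Rightarrow> ('a \<times> 'b) set" where
  "Gset Y U f = {(y, u). y \<in> Y \<and> u \<in> Adm Y U f y}"

primrec traj :: "('a \<times> 'b \<Rightarrow> 'a) \<Rightarrow> 'a \<Rightarrow> (nat \<Rightarrow> 'b) \<Rightarrow> nat \<Rightarrow> 'a" where
  "traj f y0 u 0 = y0"
| "traj f y0 u (Suc t) = f (traj f y0 u t, u t)"

definition ctrlsT :: "'a set \<Rightarrow> ('a \<Rightarrow> 'b set) \<Rightarrow> ('a \<times> 'b \<Rightarrow> 'a) \<Rightarrow> nat \<Rightarrow> 'a \<Rightarrow> (nat \<Rightarrow> 'b) set" where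
  "ctrlsT Y U f T y0 = {u. \<forall>t<T. u t \<in> Adm Y U f (traj f y0 u t)}"

definition ctrls :: "'a set \<Rightarrow> ('a \<Rightarrow> 'b set) \<Rightarrow> ('a \<times> 'b \<Rightarrow> 'a) \<Rightarrow> 'a \<Rightarrow> (nat \<Rightarrow> 'b) set" where
  "ctrls Y U f y0 = {u. \<forall>t. u t \<in> Adm Y U f (traj f y0 u t)}"

definition VT :: "'a set \<Rightarrow> ('a \<Rightarrow> 'b set) \<Rightarrow> ('a \<times> 'b \<Rightarrow> 'a) \<Rightarrow> ('a \<times> 'b \<Rightarrow> real) \<Rightarrow> nat \<Rightarrow> 'a \<Rightarrow> real" where
  "VT Y U f k T y0 = (1 / real T) *
     Inf ((\<lambda>u. \<Sum>t<T. k (traj f y0 u t, u t)) ` ctrlsT Y U f T y0)"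

definition hdisc :: "'a set \<Rightarrow> ('a \<Rightarrow> 'b set) \<Rightarrow> ('a \<times> 'b \<Rightarrow> 'a) \<Rightarrow> ('a \<times> 'b \<Rightarrow> real) \<Rightarrow> real \<Rightarrow> 'a \<Rightarrow> real" where
  "hdisc Y U f k \<alpha> y0 = (1 - \<alpha>) *
     Inf ((\<lambda>u. \<Sum>t. \<alpha> ^ t * k (traj f y0 u t, u t)) ` ctrls Y U f y0)"

definition usc_on :: "'a::metric_space set \<Rightarrow> ('a \<Rightarrow> 'b::topological_space set) \<Rightarrow> bool" where
  "usc_on Y U \<longleftrightarrow> (\<forall>y\<in>Y. \<forall>V. open V \<and> U y \<subseteq> V \<longrightarrow>
      (\<exists>e>0. \<forall>y'\<in>Y. dist y' y < e \<longrightarrow> U y' \<subseteq> V))"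

definition Wset :: "'a::metric_space set \<Rightarrow> ('a \<Rightarrow> 'b::metric_space set) \<Rightarrow> ('a \<times> 'b \<Rightarrow> 'a) \<Rightarrow> ('a \<times> 'b) measure set" where
  "Wset Y U f = {\<gamma>. prob_space \<gamma> \<and> sets \<gamma> = sets (restrict_space borel (Gset Y U f)) \<and>
      (\<forall>\<phi>::'a \<Rightarrow> real. continuous_on Y \<phi> \<longrightarrow>
         integral\<^sup>L \<gamma> (\<lambda>p. \<phi> (f p) - \<phi> (fst p)) = 0)}"

text \<open>The LP value k*(y0) (infimum in the extended reals; inf of the empty set is +infinity).\<close>
definition kstar :: "'a::metric_space set \<Rightarrow> ('a \<Rightarrow> 'b::metric_space set) \<Rightarrow> ('a \<times> 'b \<Rightarrow> 'a) \<Rightarrow> ('a \<times> 'b \<Rightarrow> real) \<Rightarrow> 'a \<Rightarrow> ereal" where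
  "kstar Y U f k y0 = Inf {ereal (integral\<^sup>L \<gamma> k) | \<gamma> \<xi>.
      \<gamma> \<in> Wset Y U f \<and> finite_measure \<xi> \<and>
      sets \<xi> = sets (restrict_space borel (Gset Y U f)) \<and>
      (\<forall>\<phi>::'a \<Rightarrow> real. continuous_on Y \<phi> \<longrightarrow>
         integral\<^sup>L \<gamma> (\<lambda>p. \<phi> y0 - \<phi> (fst p)) + integral\<^sup>L \<xi> (\<lambda>p. \<phi> (f p) - \<phi> (fst p)) = 0)}"

end

theory Submission
  imports Defs
begin

text \<open>
  Write \<open>S\<^sub>T = T V\<^sub>T\<close> and \<open>H\<^sub>\<alpha> = h\<^sub>\<alpha> / (1 - \<alpha>)\<close> for the unnormalised values.
  Dynamic programming gives, for \<open>(y, u) \<in> G\<close>,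
  \<open>S\<^sub>T\<^sub>+\<^sub>1(y) \<le> k(y, u) + S\<^sub>T(f(y, u))\<close> and \<open>H\<^sub>\<alpha>(y) \<le> k(y, u) + \<alpha> H\<^sub>\<alpha>(f(y, u))\<close>.
  Let \<open>(\<gamma>, \<xi>)\<close> be feasible for the LP.
  Since \<open>\<gamma> \<in> W\<close> is invariant under \<open>f\<close>, integrating these inequalities against \<open>\<gamma>\<close> gives
  \<open>\<integral>S\<^sub>T d\<gamma> \<le> T \<integral>k d\<gamma>\<close> and \<open>(1 - \<alpha>) \<integral>H\<^sub>\<alpha> d\<gamma> \<le> \<integral>k d\<gamma>\<close>.
  Testing the second constraint with \<open>\<phi> = S\<^sub>T\<close> or \<open>\<phi> = H\<^sub>\<alpha>\<close>, whose increments
  \<open>\<phi>(y) - \<phi>(f(y, u))\<close> are at most \<open>2 max |k|\<close>, gives \<open>\<phi>(y\<^sub>0) \<le> \<integral>\<phi> d\<gamma> + 2 max |k| \<xi>(G)\<close>.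
  Hence \<open>V\<^sub>T(y\<^sub>0) \<le> \<integral>k d\<gamma> + O(1/T)\<close> and \<open>h\<^sub>\<alpha>(y\<^sub>0) \<le> \<integral>k d\<gamma> + O(1 - \<alpha>)\<close>.
  The continuity hypotheses are exactly what makes \<open>S\<^sub>T\<close> and \<open>H\<^sub>\<alpha>\<close> admissible test functions.
\<close>

definition min_cost :: "'a set \<Rightarrow> ('a \<Rightarrow> 'b set) \<Rightarrow> ('a \<times> 'b \<Rightarrow> 'a) \<Rightarrow> ('a \<times> 'b \<Rightarrow> real) \<Rightarrow> nat \<Rightarrow> 'a \<Rightarrow> real" where
  "min_cost Y U f k T y0 = Inf ((\<lambda>u. \<Sum>t<T. k (traj f y0 u t, u t)) ` ctrlsT Y U f T y0)"

definition min_disc_cost :: "'a set \<Rightarrow> ('a \<Rightarrow> 'b set) \<Rightarrow> ('a \<times> 'b \<Rightarrow> 'a) \<Rightarrow> ('a \<times> 'b \<Rightarrow> real) \<Rightarrow> real \<Rightarrow> 'a \<Rightarrow> real" where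
  "min_disc_cost Y U f k \<alpha> y0 = Inf ((\<lambda>u. \<Sum>t. \<alpha> ^ t * k (traj f y0 u t, u t)) ` ctrls Y U f y0)"

lemma VT_eq_min_cost: "VT Y U f k T y = min_cost Y U f k T y / real T"
  by (simp add: VT_def min_cost_def)

lemma hdisc_eq_min_disc_cost: "hdisc Y U f k \<alpha> y = (1 - \<alpha>) * min_disc_cost Y U f k \<alpha> y"
  by (simp add: hdisc_def min_disc_cost_def)

lemma min_cost_0 [simp]: "min_cost Y U f k 0 y = 0"
  by (simp add: min_cost_def ctrlsT_def)

lemma Gset_iff: "(y, u) \<in> Gset Y U f \<longleftrightarrow> y \<in> Y \<and> u \<in> Adm Y U f y"
  by (simp add: Gset_def)

lemma f_Gset_in_Y: "p \<in> Gset Y U f \<Longrightarrow> f p \<in> Y"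
  by (auto simp: Gset_def Adm_def)

lemma fst_Gset_in_Y: "p \<in> Gset Y U f \<Longrightarrow> fst p \<in> Y"
  by (auto simp: Gset_def)

lemma traj_in_Y:
  assumes "y \<in> Y" "u \<in> ctrlsT Y U f T y" "t \<le> T"
  shows "traj f y u t \<in> Y"
  using assms(3)
proof (induction t)
  case 0
  then show ?case using assms(1) by simp
next
  case (Suc t)
  then have "u t \<in> Adm Y U f (traj f y u t)"
    using assms(2) by (simp add: ctrlsT_def)
  then show ?case by (simp add: Adm_def)
qed

lemma traj_in_Gset:
  assumes "y \<in> Y" "u \<in> ctrlsT Y U f T y" "t < T"
  shows "(traj f y u t, u t) \<in> Gset Y U f"
  using traj_in_Y[OF assms(1,2), of t] assms(2,3) by (simp add: Gset_iff ctrlsT_def)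

lemma ctrls_subset_ctrlsT: "ctrls Y U f y \<subseteq> ctrlsT Y U f T y"
  by (auto simp: ctrls_def ctrlsT_def)

lemma traj_case_nat_Suc: "traj f y (case_nat u v) (Suc t) = traj f (f (y, u)) v t"
  by (induction t) simp_all

lemma case_nat_in_ctrlsT:
  assumes "u \<in> Adm Y U f y" "v \<in> ctrlsT Y U f T (f (y, u))"
  shows "case_nat u v \<in> ctrlsT Y U f (Suc T) y"
  using assms unfolding ctrlsT_def
  by (auto simp: less_Suc_eq_0_disj traj_case_nat_Suc simp del: traj.simps(2))

lemma case_nat_in_ctrls:
  assumes "u \<in> Adm Y U f y" "v \<in> ctrls Y U f (f (y, u))"
  shows "case_nat u v \<in> ctrls Y U f y"
  using assms unfolding ctrls_def
  by (auto simp: traj_case_nat_Suc split: nat.split simp del: traj.simps(2))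

lemma ctrls_nonemptyI:
  assumes Adm_nonempty: "\<And>y. y \<in> Y \<Longrightarrow> Adm Y U f y \<noteq> {}" and "y \<in> Y"
  shows "ctrls Y U f y \<noteq> {}"
proof -
  define select where "select z = (SOME v. v \<in> Adm Y U f z)" for z
  have select: "select z \<in> Adm Y U f z" if "z \<in> Y" for z
    using Adm_nonempty[OF that] unfolding select_def by (simp add: some_in_eq)
  define z where "z = rec_nat y (\<lambda>_ zn. f (zn, select zn))"
  have z_in_Y: "z n \<in> Y" for n
    by (induction n) (use assms(2) select in \<open>simp_all add: z_def Adm_def\<close>)
  have "traj f y (select \<circ> z) n = z n" for n
    by (induction n) (simp_all add: z_def)
  then have "select \<circ> z \<in> ctrls Y U f y"
    using select z_in_Y by (simp add: ctrls_def)
  then show ?thesis by blast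
qed

lemma abs_cInf_le:
  fixes S :: "real set"
  assumes "S \<noteq> {}" "\<And>x. x \<in> S \<Longrightarrow> \<bar>x\<bar> \<le> B"
  shows "\<bar>Inf S\<bar> \<le> B"
proof -
  obtain x where "x \<in> S" using assms(1) by blast
  have "bdd_below S"
    using assms(2) by (intro bdd_belowI[of _ "- B"]) (force simp: abs_le_iff)
  then have "Inf S \<le> B"
    using cInf_lower[OF \<open>x \<in> S\<close>] assms(2)[OF \<open>x \<in> S\<close>] by force
  moreover have "- B \<le> Inf S"
    using assms by (intro cInf_greatest) (force simp: abs_le_iff)+
  ultimately show ?thesis by linarith
qed

locale bounded_cost_control =
  fixes Y :: "'a set" and U :: "'a \<Rightarrow> 'b set" and f :: "'a \<times> 'b \<Rightarrow> 'a"
    and k :: "'a \<times> 'b \<Rightarrow> real" and M :: real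
  assumes Adm_nonempty: "y \<in> Y \<Longrightarrow> Adm Y U f y \<noteq> {}"
    and abs_cost_le: "p \<in> Gset Y U f \<Longrightarrow> \<bar>k p\<bar> \<le> M"
begin

lemma ctrls_nonempty: "y \<in> Y \<Longrightarrow> ctrls Y U f y \<noteq> {}"
  by (rule ctrls_nonemptyI) (use Adm_nonempty in auto)

lemma ctrlsT_nonempty: "y \<in> Y \<Longrightarrow> ctrlsT Y U f T y \<noteq> {}"
  using ctrls_nonempty ctrls_subset_ctrlsT[of Y U f y T] by blast

lemma abs_sum_cost_le:
  assumes "y \<in> Y" "u \<in> ctrlsT Y U f T y"
  shows "\<bar>\<Sum>t<T. k (traj f y u t, u t)\<bar> \<le> T * M"
proof -
  have "\<bar>\<Sum>t<T. k (traj f y u t, u t)\<bar> \<le> (\<Sum>t<T. \<bar>k (traj f y u t, u t)\<bar>)"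
    by (rule sum_abs)
  also have "\<dots> \<le> (\<Sum>t<T. M)"
    using abs_cost_le traj_in_Gset[OF assms] by (intro sum_mono) simp
  finally show ?thesis by simp
qed

lemma min_cost_le:
  assumes "y \<in> Y" "u \<in> ctrlsT Y U f T y"
  shows "min_cost Y U f k T y \<le> (\<Sum>t<T. k (traj f y u t, u t))"
  unfolding min_cost_def
proof (rule cInf_lower)
  show "bdd_below ((\<lambda>u. \<Sum>t<T. k (traj f y u t, u t)) ` ctrlsT Y U f T y)"
    using abs_sum_cost_le[OF assms(1)] by (intro bdd_belowI[of _ "- (T * M)"]) (force simp: abs_le_iff)
qed (use assms(2) in simp)

lemma min_cost_greatest:
  assumes "y \<in> Y" "\<And>u. u \<in> ctrlsT Y U f T y \<Longrightarrow> c \<le> (\<Sum>t<T. k (traj f y u t, u t))"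
  shows "c \<le> min_cost Y U f k T y"
  unfolding min_cost_def
  using ctrlsT_nonempty[OF assms(1)] assms(2) by (intro cInf_greatest) auto

lemma min_cost_Suc_le:
  assumes "p \<in> Gset Y U f"
  shows "min_cost Y U f k (Suc T) (fst p) \<le> k p + min_cost Y U f k T (f p)"
proof -
  obtain y u where p: "p = (y, u)" and y: "y \<in> Y" and u: "u \<in> Adm Y U f y"
    using assms by (cases p) (simp add: Gset_iff)
  have "min_cost Y U f k (Suc T) y - k (y, u) \<le> min_cost Y U f k T (f (y, u))"
  proof (rule min_cost_greatest)
    show "f (y, u) \<in> Y" using u by (simp add: Adm_def)
    fix v assume v: "v \<in> ctrlsT Y U f T (f (y, u))"
    have "min_cost Y U f k (Suc T) y \<le> (\<Sum>t<Suc T. k (traj f y (case_nat u v) t, case_nat u v t))"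
      by (rule min_cost_le[OF y case_nat_in_ctrlsT[OF u v]])
    also have "\<dots> = k (y, u) + (\<Sum>t<T. k (traj f (f (y, u)) v t, v t))"
      unfolding sum.lessThan_Suc_shift by (simp add: traj_case_nat_Suc del: traj.simps(2))
    finally show "min_cost Y U f k (Suc T) y - k (y, u) \<le> (\<Sum>t<T. k (traj f (f (y, u)) v t, v t))"
      by simp
  qed
  then show ?thesis using p by simp
qed

lemma min_cost_le_Suc:
  assumes "y \<in> Y"
  shows "min_cost Y U f k T y \<le> min_cost Y U f k (Suc T) y + M"
proof -
  have "min_cost Y U f k T y - M \<le> min_cost Y U f k (Suc T) y"
  proof (rule min_cost_greatest[OF assms])
    fix u assume u: "u \<in> ctrlsT Y U f (Suc T) y"
    then have "u \<in> ctrlsT Y U f T y" by (simp add: ctrlsT_def)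
    then have "min_cost Y U f k T y \<le> (\<Sum>t<T. k (traj f y u t, u t))"
      by (rule min_cost_le[OF assms])
    moreover have "\<bar>k (traj f y u T, u T)\<bar> \<le> M"
      using abs_cost_le traj_in_Gset[OF assms u] by simp
    ultimately show "min_cost Y U f k T y - M \<le> (\<Sum>t<Suc T. k (traj f y u t, u t))"
      by simp
  qed
  then show ?thesis by simp
qed

lemma min_cost_Suc_diff_le:
  assumes "p \<in> Gset Y U f"
  shows "min_cost Y U f k (Suc T) (fst p) - min_cost Y U f k (Suc T) (f p) \<le> 2 * M"
  using min_cost_Suc_le[OF assms, where T=T] min_cost_le_Suc[OF f_Gset_in_Y[OF assms], where T=T]
    abs_cost_le[OF assms]
  by linarith

lemma disc_cost_summable_abs_le:
  assumes "y \<in> Y" "u \<in> ctrls Y U f y" "0 < \<alpha>" "\<alpha> < 1"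
  shows "summable (\<lambda>t. \<alpha> ^ t * k (traj f y u t, u t))"
    and "\<bar>\<Sum>t. \<alpha> ^ t * k (traj f y u t, u t)\<bar> \<le> M / (1 - \<alpha>)"
proof -
  have le: "\<bar>\<alpha> ^ t * k (traj f y u t, u t)\<bar> \<le> M * \<alpha> ^ t" for t
    using abs_cost_le traj_in_Gset[OF assms(1) subsetD[OF ctrls_subset_ctrlsT assms(2)], of t "Suc t"]
      assms(3) by (simp add: abs_mult mult.commute mult_left_mono)
  have "(\<lambda>t. M * \<alpha> ^ t) sums (M * (1 / (1 - \<alpha>)))"
    using assms(3,4) by (intro sums_mult geometric_sums) simp
  then have geometric: "(\<lambda>t. M * \<alpha> ^ t) sums (M / (1 - \<alpha>))"
    by simp
  have abs_summable: "summable (\<lambda>t. \<bar>\<alpha> ^ t * k (traj f y u t, u t)\<bar>)"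
    by (rule summable_comparison_test'[OF sums_summable[OF geometric]]) (use le in simp)
  then show "summable (\<lambda>t. \<alpha> ^ t * k (traj f y u t, u t))"
    by (rule summable_rabs_cancel)
  have "\<bar>\<Sum>t. \<alpha> ^ t * k (traj f y u t, u t)\<bar> \<le> (\<Sum>t. \<bar>\<alpha> ^ t * k (traj f y u t, u t)\<bar>)"
    by (rule summable_rabs[OF abs_summable])
  also have "\<dots> \<le> (\<Sum>t. M * \<alpha> ^ t)"
    by (rule suminf_le[OF le abs_summable sums_summable[OF geometric]])
  also have "\<dots> = M / (1 - \<alpha>)"
    using geometric by (rule sums_unique[symmetric])
  finally show "\<bar>\<Sum>t. \<alpha> ^ t * k (traj f y u t, u t)\<bar> \<le> M / (1 - \<alpha>)" .
qed

lemma abs_min_disc_cost_le: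
  assumes "y \<in> Y" "0 < \<alpha>" "\<alpha> < 1"
  shows "\<bar>min_disc_cost Y U f k \<alpha> y\<bar> \<le> M / (1 - \<alpha>)"
  unfolding min_disc_cost_def
  using ctrls_nonempty[OF assms(1)] disc_cost_summable_abs_le(2)[OF assms(1) _ assms(2,3)]
  by (intro abs_cInf_le) auto

lemma min_disc_cost_le:
  assumes "y \<in> Y" "u \<in> ctrls Y U f y" "0 < \<alpha>" "\<alpha> < 1"
  shows "min_disc_cost Y U f k \<alpha> y \<le> (\<Sum>t. \<alpha> ^ t * k (traj f y u t, u t))"
  unfolding min_disc_cost_def
proof (rule cInf_lower)
  show "bdd_below ((\<lambda>u. \<Sum>t. \<alpha> ^ t * k (traj f y u t, u t)) ` ctrls Y U f y)"
    using disc_cost_summable_abs_le(2)[OF assms(1) _ assms(3,4)]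
    by (intro bdd_belowI[of _ "- (M / (1 - \<alpha>))"]) (force simp: abs_le_iff)
qed (use assms(2) in simp)

lemma min_disc_cost_greatest:
  assumes "y \<in> Y" "\<And>u. u \<in> ctrls Y U f y \<Longrightarrow> c \<le> (\<Sum>t. \<alpha> ^ t * k (traj f y u t, u t))"
  shows "c \<le> min_disc_cost Y U f k \<alpha> y"
  unfolding min_disc_cost_def
  using ctrls_nonempty[OF assms(1)] assms(2) by (intro cInf_greatest) auto

lemma min_disc_cost_le_step:
  assumes "p \<in> Gset Y U f" "0 < \<alpha>" "\<alpha> < 1"
  shows "min_disc_cost Y U f k \<alpha> (fst p) \<le> k p + \<alpha> * min_disc_cost Y U f k \<alpha> (f p)"
proof -
  obtain y u where p: "p = (y, u)" and y: "y \<in> Y" and u: "u \<in> Adm Y U f y"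
    using assms(1) by (cases p) (simp add: Gset_iff)
  have z: "f (y, u) \<in> Y" using u by (simp add: Adm_def)
  have "(min_disc_cost Y U f k \<alpha> y - k (y, u)) / \<alpha> \<le> min_disc_cost Y U f k \<alpha> (f (y, u))"
  proof (rule min_disc_cost_greatest[OF z])
    fix v assume v: "v \<in> ctrls Y U f (f (y, u))"
    define w where "w = case_nat u v"
    have w: "w \<in> ctrls Y U f y"
      unfolding w_def by (rule case_nat_in_ctrls[OF u v])
    have "min_disc_cost Y U f k \<alpha> y \<le> (\<Sum>t. \<alpha> ^ t * k (traj f y w t, w t))"
      by (rule min_disc_cost_le[OF y w assms(2,3)])
    also have "\<dots> = k (y, u) + (\<Sum>t. \<alpha> ^ Suc t * k (traj f y w (Suc t), w (Suc t)))"
      using suminf_split_head[OF disc_cost_summable_abs_le(1)[OF y w assms(2,3)]] by (simp add: w_def)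
    also have "(\<Sum>t. \<alpha> ^ Suc t * k (traj f y w (Suc t), w (Suc t)))
        = \<alpha> * (\<Sum>t. \<alpha> ^ t * k (traj f (f (y, u)) v t, v t))"
      using suminf_mult[OF disc_cost_summable_abs_le(1)[OF z v assms(2,3)], of \<alpha>]
      by (simp add: w_def traj_case_nat_Suc mult.assoc del: traj.simps(2))
    finally show "(min_disc_cost Y U f k \<alpha> y - k (y, u)) / \<alpha> \<le> (\<Sum>t. \<alpha> ^ t * k (traj f (f (y, u)) v t, v t))"
      using assms(2) by (simp add: divide_simps mult.commute)
  qed
  then show ?thesis
    using p assms(2) by (simp add: divide_simps mult.commute)
qed

lemma min_disc_cost_diff_le:
  assumes "p \<in> Gset Y U f" "0 < \<alpha>" "\<alpha> < 1"
  shows "min_disc_cost Y U f k \<alpha> (fst p) - min_disc_cost Y U f k \<alpha> (f p) \<le> 2 * M"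
proof -
  let ?H = "min_disc_cost Y U f k \<alpha>"
  have "- (M / (1 - \<alpha>)) \<le> ?H (f p)"
    using abs_min_disc_cost_le[OF f_Gset_in_Y[OF assms(1)] assms(2,3)] by linarith
  then have "(1 - \<alpha>) * - (M / (1 - \<alpha>)) \<le> (1 - \<alpha>) * ?H (f p)"
    using assms(3) by (intro mult_left_mono) auto
  then have "- M \<le> (1 - \<alpha>) * ?H (f p)"
    using assms(3) by simp
  moreover have "\<alpha> * ?H (f p) = ?H (f p) - (1 - \<alpha>) * ?H (f p)"
    by (simp add: algebra_simps)
  ultimately show ?thesis
    using min_disc_cost_le_step[OF assms] abs_cost_le[OF assms(1)] by linarith
qed

end

lemma integrable_bounded_continuous_on:
  fixes g :: "'a::topological_space \<Rightarrow> real"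
  assumes "finite_measure N" "sets N = sets (restrict_space borel G)"
    and "continuous_on G g" "bounded (g ` G)"
  shows "integrable N g"
proof -
  have space: "space N = G"
    using sets_eq_imp_space_eq[OF assms(2)] by (simp add: space_restrict_space)
  obtain B where B: "\<forall>p\<in>G. \<bar>g p\<bar> \<le> B"
    using assms(4) by (auto simp: bounded_iff)
  have "g \<in> borel_measurable N"
    unfolding measurable_cong_sets[OF assms(2) refl]
    by (rule borel_measurable_continuous_on_restrict[OF assms(3)])
  then show ?thesis
    using B by (intro finite_measure.integrable_const_bound[OF assms(1), of _ B]) (auto simp: space)
qed

definition lp_feasible :: "'a::metric_space set \<Rightarrow> ('a \<Rightarrow> 'b::metric_space set) \<Rightarrow> ('a \<times> 'b \<Rightarrow> 'a) \<Rightarrow> 'a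
    \<Rightarrow> ('a \<times> 'b) measure \<Rightarrow> ('a \<times> 'b) measure \<Rightarrow> bool" where
  "lp_feasible Y U f y0 \<gamma> \<xi> \<longleftrightarrow> \<gamma> \<in> Wset Y U f \<and> finite_measure \<xi> \<and>
      sets \<xi> = sets (restrict_space borel (Gset Y U f)) \<and>
      (\<forall>\<phi>::'a \<Rightarrow> real. continuous_on Y \<phi> \<longrightarrow>
         integral\<^sup>L \<gamma> (\<lambda>p. \<phi> y0 - \<phi> (fst p)) + integral\<^sup>L \<xi> (\<lambda>p. \<phi> (f p) - \<phi> (fst p)) = 0)"

lemma le_kstarI:
  assumes "\<And>\<gamma> \<xi>. lp_feasible Y U f y0 \<gamma> \<xi> \<Longrightarrow> x \<le> ereal (integral\<^sup>L \<gamma> k)"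
  shows "x \<le> kstar Y U f k y0"
  unfolding kstar_def using assms by (auto simp: lp_feasible_def intro!: Inf_greatest)

lemma WsetD:
  assumes "\<gamma> \<in> Wset Y U f"
  shows "prob_space \<gamma>" and "finite_measure \<gamma>"
    and "sets \<gamma> = sets (restrict_space borel (Gset Y U f))" and "space \<gamma> = Gset Y U f"
  using assms sets_eq_imp_space_eq[of \<gamma> "restrict_space borel (Gset Y U f)"]
  by (auto simp: Wset_def space_restrict_space prob_space.finite_measure)

lemma Limsup_le_of_eventually_le:
  fixes g e :: "'a \<Rightarrow> real"
  assumes "F \<noteq> bot" "eventually (\<lambda>x. g x \<le> c + e x) F" "(e \<longlongrightarrow> 0) F"
  shows "Limsup F (\<lambda>x. ereal (g x)) \<le> ereal c"
proof -
  have "Limsup F (\<lambda>x. ereal (g x)) \<le> Limsup F (\<lambda>x. ereal (c + e x))"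
    using assms(2) by (intro Limsup_mono) (simp add: eventually_mono)
  also have "\<dots> = ereal c"
    using assms(1) tendsto_add[OF tendsto_const assms(3), of c] by (intro lim_imp_Limsup) auto
  finally show ?thesis .
qed

locale lp_control = bounded_cost_control Y U f k M
  for Y :: "'a::metric_space set" and U :: "'a \<Rightarrow> 'b::metric_space set" and f k M +
  assumes compact_Y: "compact Y"
    and continuous_f: "continuous_on (Gset Y U f) f"
    and continuous_k: "continuous_on (Gset Y U f) k"
begin

lemma integrable_on_Gset:
  fixes \<phi> :: "'a \<Rightarrow> real"
  assumes "finite_measure N" "sets N = sets (restrict_space borel (Gset Y U f))"
    and "continuous_on Y \<phi>"
  shows "integrable N (\<lambda>p. \<phi> (fst p))" and "integrable N (\<lambda>p. \<phi> (f p))"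
    and "integrable N k"
proof -
  have bounded: "bounded (\<phi> ` Y)"
    using compact_continuous_image[OF assms(3) compact_Y] by (rule compact_imp_bounded)
  show "integrable N (\<lambda>p. \<phi> (fst p))"
    using fst_Gset_in_Y
    by (intro integrable_bounded_continuous_on[OF assms(1,2)] bounded_subset[OF bounded]
        continuous_on_compose2[OF assms(3) continuous_on_fst]) (auto intro!: imageI)
  show "integrable N (\<lambda>p. \<phi> (f p))"
    using f_Gset_in_Y
    by (intro integrable_bounded_continuous_on[OF assms(1,2)] bounded_subset[OF bounded]
        continuous_on_compose2[OF assms(3) continuous_f]) (auto intro!: imageI)
  have "bounded (k ` Gset Y U f)"
    unfolding bounded_iff using abs_cost_le by (intro exI[of _ M]) auto
  then show "integrable N k"
    by (rule integrable_bounded_continuous_on[OF assms(1,2) continuous_k])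
qed

lemma Wset_integral_f_eq:
  fixes \<phi> :: "'a \<Rightarrow> real"
  assumes "\<gamma> \<in> Wset Y U f" "continuous_on Y \<phi>"
  shows "integral\<^sup>L \<gamma> (\<lambda>p. \<phi> (f p)) = integral\<^sup>L \<gamma> (\<lambda>p. \<phi> (fst p))"
proof -
  have "integral\<^sup>L \<gamma> (\<lambda>p. \<phi> (f p) - \<phi> (fst p)) = 0"
    using assms by (simp add: Wset_def)
  then show ?thesis
    using integrable_on_Gset[OF WsetD(2,3)[OF assms(1)] assms(2)] by simp
qed

lemma Wset_integral_le:
  fixes \<phi> \<psi> :: "'a \<Rightarrow> real"
  assumes \<gamma>: "\<gamma> \<in> Wset Y U f" and "continuous_on Y \<phi>" "continuous_on Y \<psi>"
    and le: "\<And>p. p \<in> Gset Y U f \<Longrightarrow> \<phi> (fst p) \<le> k p + \<psi> (f p)"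
  shows "integral\<^sup>L \<gamma> (\<lambda>p. \<phi> (fst p)) \<le> integral\<^sup>L \<gamma> k + integral\<^sup>L \<gamma> (\<lambda>p. \<psi> (fst p))"
proof -
  note integrable = integrable_on_Gset[OF WsetD(2,3)[OF \<gamma>]]
  have "integral\<^sup>L \<gamma> (\<lambda>p. \<phi> (fst p)) \<le> integral\<^sup>L \<gamma> (\<lambda>p. k p + \<psi> (f p))"
    using integrable assms(2,3) le by (intro integral_mono) (auto simp: WsetD(4)[OF \<gamma>])
  also have "\<dots> = integral\<^sup>L \<gamma> k + integral\<^sup>L \<gamma> (\<lambda>p. \<psi> (f p))"
    using integrable assms(3) by simp
  also have "integral\<^sup>L \<gamma> (\<lambda>p. \<psi> (f p)) = integral\<^sup>L \<gamma> (\<lambda>p. \<psi> (fst p))"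
    by (rule Wset_integral_f_eq[OF \<gamma> assms(3)])
  finally show ?thesis .
qed

lemma lp_feasible_le:
  fixes \<phi> :: "'a \<Rightarrow> real"
  assumes feasible: "lp_feasible Y U f y0 \<gamma> \<xi>" and "continuous_on Y \<phi>"
    and le: "\<And>p. p \<in> Gset Y U f \<Longrightarrow> \<phi> (fst p) - \<phi> (f p) \<le> D"
  shows "\<phi> y0 \<le> integral\<^sup>L \<gamma> (\<lambda>p. \<phi> (fst p)) + D * measure \<xi> (space \<xi>)"
proof -
  have \<gamma>: "\<gamma> \<in> Wset Y U f" and \<xi>: "finite_measure \<xi>" "sets \<xi> = sets (restrict_space borel (Gset Y U f))"
    and eq: "integral\<^sup>L \<gamma> (\<lambda>p. \<phi> y0 - \<phi> (fst p)) + integral\<^sup>L \<xi> (\<lambda>p. \<phi> (f p) - \<phi> (fst p)) = 0"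
    using feasible assms(2) by (auto simp: lp_feasible_def)
  note integrable_\<gamma> = integrable_on_Gset[OF WsetD(2,3)[OF \<gamma>] assms(2)]
  note integrable_\<xi> = integrable_on_Gset[OF \<xi> assms(2)]
  have space_\<xi>: "space \<xi> = Gset Y U f"
    using sets_eq_imp_space_eq[OF \<xi>(2)] by (simp add: space_restrict_space)
  have "integral\<^sup>L \<gamma> (\<lambda>p. \<phi> y0 - \<phi> (fst p)) = \<phi> y0 - integral\<^sup>L \<gamma> (\<lambda>p. \<phi> (fst p))"
    using Bochner_Integration.integral_diff[OF finite_measure.integrable_const integrable_\<gamma>(1),
        OF WsetD(2)[OF \<gamma>]] prob_space.prob_space[OF WsetD(1)[OF \<gamma>]]
    by simp
  moreover have "integral\<^sup>L \<xi> (\<lambda>p. \<phi> (fst p) - \<phi> (f p)) \<le> integral\<^sup>L \<xi> (\<lambda>p. D)"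
    using integrable_\<xi> le by (intro integral_mono) (auto simp: space_\<xi> finite_measure.integrable_const[OF \<xi>(1)])
  moreover have "integral\<^sup>L \<xi> (\<lambda>p. \<phi> (f p) - \<phi> (fst p)) = - integral\<^sup>L \<xi> (\<lambda>p. \<phi> (fst p) - \<phi> (f p))"
    using integrable_\<xi> by simp
  ultimately show ?thesis
    using eq by (simp add: mult.commute)
qed

lemma min_cost_le_lp_value:
  assumes continuous: "\<And>T. continuous_on Y (min_cost Y U f k T)"
    and feasible: "lp_feasible Y U f y0 \<gamma> \<xi>"
  shows "min_cost Y U f k (Suc T) y0 \<le> Suc T * integral\<^sup>L \<gamma> k + 2 * M * measure \<xi> (space \<xi>)"
proof -
  have \<gamma>: "\<gamma> \<in> Wset Y U f"
    using feasible by (simp add: lp_feasible_def)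
  have integral_le: "integral\<^sup>L \<gamma> (\<lambda>p. min_cost Y U f k n (fst p)) \<le> n * integral\<^sup>L \<gamma> k" for n
  proof (induction n)
    case (Suc n)
    have "integral\<^sup>L \<gamma> (\<lambda>p. min_cost Y U f k (Suc n) (fst p))
        \<le> integral\<^sup>L \<gamma> k + integral\<^sup>L \<gamma> (\<lambda>p. min_cost Y U f k n (fst p))"
      by (rule Wset_integral_le[OF \<gamma> continuous continuous min_cost_Suc_le])
    with Suc.IH show ?case
      by (simp add: algebra_simps)
  qed simp
  have "min_cost Y U f k (Suc T) y0
      \<le> integral\<^sup>L \<gamma> (\<lambda>p. min_cost Y U f k (Suc T) (fst p)) + 2 * M * measure \<xi> (space \<xi>)"
    by (rule lp_feasible_le[OF feasible continuous min_cost_Suc_diff_le])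
  with integral_le[of "Suc T"] show ?thesis
    by linarith
qed

lemma min_disc_cost_le_lp_value:
  assumes "0 < \<alpha>" "\<alpha> < 1" and continuous: "continuous_on Y (min_disc_cost Y U f k \<alpha>)"
    and feasible: "lp_feasible Y U f y0 \<gamma> \<xi>"
  shows "(1 - \<alpha>) * min_disc_cost Y U f k \<alpha> y0
    \<le> integral\<^sup>L \<gamma> k + (1 - \<alpha>) * (2 * M * measure \<xi> (space \<xi>))"
proof -
  let ?H = "min_disc_cost Y U f k \<alpha>"
  have \<gamma>: "\<gamma> \<in> Wset Y U f"
    using feasible by (simp add: lp_feasible_def)
  have "integral\<^sup>L \<gamma> (\<lambda>p. ?H (fst p)) \<le> integral\<^sup>L \<gamma> k + integral\<^sup>L \<gamma> (\<lambda>p. \<alpha> * ?H (fst p))"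
    using continuous min_disc_cost_le_step[OF _ assms(1,2)]
    by (intro Wset_integral_le[OF \<gamma>] continuous_on_mult_left) auto
  then have integral_le: "(1 - \<alpha>) * integral\<^sup>L \<gamma> (\<lambda>p. ?H (fst p)) \<le> integral\<^sup>L \<gamma> k"
    by (simp add: algebra_simps)
  have "?H y0 \<le> integral\<^sup>L \<gamma> (\<lambda>p. ?H (fst p)) + 2 * M * measure \<xi> (space \<xi>)"
    by (rule lp_feasible_le[OF feasible continuous min_disc_cost_diff_le[OF _ assms(1,2)]])
  then have "(1 - \<alpha>) * ?H y0
      \<le> (1 - \<alpha>) * (integral\<^sup>L \<gamma> (\<lambda>p. ?H (fst p)) + 2 * M * measure \<xi> (space \<xi>))"
    using assms(2) by (intro mult_left_mono) auto
  with integral_le show ?thesis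
    by (simp add: algebra_simps)
qed

lemma limsup_VT_le_kstar:
  assumes "\<And>T. T \<ge> 1 \<Longrightarrow> continuous_on Y (VT Y U f k T)"
  shows "limsup (\<lambda>T. ereal (VT Y U f k T y0)) \<le> kstar Y U f k y0"
proof (rule le_kstarI)
  fix \<gamma> \<xi> assume feasible: "lp_feasible Y U f y0 \<gamma> \<xi>"
  let ?c = "integral\<^sup>L \<gamma> k" and ?m = "measure \<xi> (space \<xi>)"
  have continuous: "continuous_on Y (min_cost Y U f k T)" for T
  proof (cases "T = 0")
    case False
    then have "min_cost Y U f k T = (\<lambda>y. real T * VT Y U f k T y)"
      by (simp add: VT_eq_min_cost fun_eq_iff)
    then show ?thesis
      using assms[of T] False by (simp add: continuous_on_mult_left)
  qed simp
  have "eventually (\<lambda>T. VT Y U f k T y0 \<le> ?c + 2 * M * ?m / real T) sequentially"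
  proof (rule eventually_sequentiallyI)
    fix T :: nat assume "1 \<le> T"
    then obtain n where T: "T = Suc n"
      by (cases T) auto
    have "VT Y U f k T y0 = min_cost Y U f k T y0 / T"
      by (rule VT_eq_min_cost)
    also have "\<dots> \<le> (T * ?c + 2 * M * ?m) / T"
      using min_cost_le_lp_value[OF continuous feasible, of n] T by (intro divide_right_mono) simp_all
    also have "\<dots> = ?c + 2 * M * ?m / real T"
      using T by (simp add: add_divide_distrib)
    finally show "VT Y U f k T y0 \<le> ?c + 2 * M * ?m / real T" .
  qed
  then show "limsup (\<lambda>T. ereal (VT Y U f k T y0)) \<le> ereal ?c"
    by (rule Limsup_le_of_eventually_le[OF sequentially_bot _ lim_const_over_n])
qed

lemma Limsup_hdisc_le_kstar:
  assumes "\<And>\<alpha>. 0 < \<alpha> \<Longrightarrow> \<alpha> < 1 \<Longrightarrow> continuous_on Y (hdisc Y U f k \<alpha>)"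
  shows "Limsup (at_left 1) (\<lambda>\<alpha>. ereal (hdisc Y U f k \<alpha> y0)) \<le> kstar Y U f k y0"
proof (rule le_kstarI)
  fix \<gamma> \<xi> assume feasible: "lp_feasible Y U f y0 \<gamma> \<xi>"
  let ?c = "integral\<^sup>L \<gamma> k" and ?m = "measure \<xi> (space \<xi>)"
  have "hdisc Y U f k \<alpha> y0 \<le> ?c + (1 - \<alpha>) * (2 * M * ?m)" if "0 < \<alpha>" "\<alpha> < 1" for \<alpha>
  proof -
    have "min_disc_cost Y U f k \<alpha> = (\<lambda>y. hdisc Y U f k \<alpha> y / (1 - \<alpha>))"
      using that by (simp add: hdisc_eq_min_disc_cost fun_eq_iff)
    moreover have "continuous_on Y (\<lambda>y. hdisc Y U f k \<alpha> y / (1 - \<alpha>))"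
      using assms[OF that] that by (intro continuous_intros) auto
    ultimately have "continuous_on Y (min_disc_cost Y U f k \<alpha>)"
      by simp
    then show ?thesis
      using min_disc_cost_le_lp_value[OF that _ feasible] by (simp add: hdisc_eq_min_disc_cost)
  qed
  moreover have "eventually (\<lambda>\<alpha>. 0 < \<alpha> \<and> \<alpha> < 1) (at_left (1::real))"
    using eventually_at_left_real[of 0 "1::real"] by simp
  ultimately have "eventually (\<lambda>\<alpha>. hdisc Y U f k \<alpha> y0 \<le> ?c + (1 - \<alpha>) * (2 * M * ?m)) (at_left 1)"
    by (auto elim: eventually_mono)
  moreover have "((\<lambda>\<alpha>. (1 - \<alpha>) * (2 * M * ?m)) \<longlongrightarrow> (1 - 1) * (2 * M * ?m)) (at_left (1::real))"
    by (intro tendsto_intros)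
  ultimately show "Limsup (at_left 1) (\<lambda>\<alpha>. ereal (hdisc Y U f k \<alpha> y0)) \<le> ereal ?c"
    by (intro Limsup_le_of_eventually_le[OF trivial_limit_at_left_real]) simp_all
qed

end

theorem theorem3p1:
  fixes Y :: "'a::euclidean_space set"
    and U0 :: "'b::metric_space set"
    and U :: "'a \<Rightarrow> 'b set"
    and f :: "'a \<times> 'b \<Rightarrow> 'a"
    and k :: "'a \<times> 'b \<Rightarrow> real"
  assumes "Y \<noteq> {}" and "compact Y"
    and "compact U0"
    and "\<And>y. y \<in> Y \<Longrightarrow> U y \<subseteq> U0"
    and "\<And>y. y \<in> Y \<Longrightarrow> compact (U y)"
    and "usc_on Y U"
    and "continuous_on (UNIV \<times> U0) f"
    and "continuous_on (UNIV \<times> U0) k"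
    and "\<And>y. y \<in> Y \<Longrightarrow> Adm Y U f y \<noteq> {}"
  shows "((\<forall>T::nat. T \<ge> 1 \<longrightarrow> continuous_on Y (VT Y U f k T)) \<longrightarrow>
            (\<forall>y0\<in>Y. limsup (\<lambda>T. ereal (VT Y U f k T y0)) \<le> kstar Y U f k y0))
       \<and> ((\<forall>\<alpha>::real. 0 < \<alpha> \<and> \<alpha> < 1 \<longrightarrow> continuous_on Y (hdisc Y U f k \<alpha>)) \<longrightarrow>
            (\<forall>y0\<in>Y. Limsup (at_left 1) (\<lambda>\<alpha>. ereal (hdisc Y U f k \<alpha> y0)) \<le> kstar Y U f k y0))"
proof -
  \<comment> \<open>Nonemptiness of \<open>Y\<close>, compactness of \<open>U y\<close> and upper semicontinuity are not needed:
    the values are infima rather than attained minima, and their continuity is assumed.\<close>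
  have G_subset: "Gset Y U f \<subseteq> Y \<times> U0"
    using assms(4) by (auto simp: Gset_def Adm_def)
  have "compact (k ` (Y \<times> U0))"
    using assms(2,3,8) by (intro compact_continuous_image compact_Times) (auto elim: continuous_on_subset)
  then obtain M where M: "\<And>p. p \<in> Y \<times> U0 \<Longrightarrow> \<bar>k p\<bar> \<le> M"
    by (metis compact_imp_bounded bounded_iff image_eqI real_norm_def)
  interpret lp_control Y U f k M
  proof
    show "continuous_on (Gset Y U f) f" "continuous_on (Gset Y U f) k"
      using G_subset by (auto intro: continuous_on_subset[OF assms(7)] continuous_on_subset[OF assms(8)])
  qed (use assms(2,9) M G_subset in auto)
  show ?thesis
    using limsup_VT_le_kstar Limsup_hdisc_le_kstar by auto
qed

end
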